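(* Let $n\geq 2$ be an integer. The ring $\mathrm{Mat}_n(\mathbb{Z})$ of $n\times n$ integer matrices has the presentation (as a unital associative ring) with two generators $x,y$ and three relations $$\mathrm{Mat}_n(\mathbb{Z}) \cong \langle x,y \mid x^n = 0,\ y^n=0,\ xy + y^{n-1}x^{n-1} = 1 \rangle.$$ That is, the quotient of the free unital associative ring $\mathbb{Z}\langle x,y\rangle$ by the two-sided ideal generated by $x^n$, $y^n$ and $xy + y^{n-1}x^{n-1} - 1$ is isomorphic to $\mathrm{Mat}_n(\mathbb{Z})$.
   Context: All rings are associative with unit, and presentations are taken in the category of unital associative rings. *)

theory Defs
  imports "HOL-Algebra.QuotRing" "Jordan_Normal_Form.Matrix"
begin

text \<open>The free unital associative ring Z<x,y> on two noncommuting generators,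
  realised as finitely supported integer-valued functions on words over the
  alphabet {True, False} (True stands for x, False for y); multiplication is
  the concatenation (Cauchy) product.\<close>

definition free_ring2 :: "(bool list \<Rightarrow> int) ring" where
  "free_ring2 = \<lparr>
     carrier = {f. finite {w. f w \<noteq> 0}},
     monoid.mult = (\<lambda>f g w. \<Sum>i\<le>length w. f (take i w) * g (drop i w)),
     one = (\<lambda>w. if w = [] then 1 else 0),
     zero = (\<lambda>w. 0),
     add = (\<lambda>f g w. f w + g w)\<rparr>"

definition gen_x :: "bool list \<Rightarrow> int" where
  "gen_x = (\<lambda>w. if w = [True] then 1 else 0)"

definition gen_y :: "bool list \<Rightarrow> int" where
  "gen_y = (\<lambda>w. if w = [False] then 1 else 0)"

definition relators :: "nat \<Rightarrow> (bool list \<Rightarrow> int) set" where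
  "relators n = {gen_x [^]\<^bsub>free_ring2\<^esub> n,
                 gen_y [^]\<^bsub>free_ring2\<^esub> n,
                 ((gen_x \<otimes>\<^bsub>free_ring2\<^esub> gen_y)
                   \<oplus>\<^bsub>free_ring2\<^esub> ((gen_y [^]\<^bsub>free_ring2\<^esub> (n - 1))
                        \<otimes>\<^bsub>free_ring2\<^esub> (gen_x [^]\<^bsub>free_ring2\<^esub> (n - 1))))
                   \<ominus>\<^bsub>free_ring2\<^esub> \<one>\<^bsub>free_ring2\<^esub>}"

end

theory Submission
  imports Defs "HOL-Algebra.UnivPoly"
begin

text \<open>Let \<open>x\<close> and \<open>y\<close> act on \<open>\<int>^n\<close> as the lower and the upper shift matrix. This
  representation kills the three relators and sends \<open>x^p y^(n-1) x^(n-1) y^q\<close> to the matrix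
  unit \<open>e_pq\<close>, so it is surjective. Conversely, in any ring in which the relations hold the
  elements \<open>E_pq = x^p y^(n-1) x^(n-1) y^q\<close> satisfy \<open>\<Sum>_p E_pp = 1\<close>, \<open>E_pi x = E_p(i-1)\<close> and
  \<open>E_pi y = E_p(i+1)\<close> (read as \<open>0\<close> out of range). Hence every word is congruent modulo the
  relators to the combination of the \<open>x^p y^(n-1) x^(n-1) y^q\<close> prescribed by its matrix, and
  the kernel of the representation is the ideal generated by the relators.\<close>

section \<open>The free ring on words\<close>

definition supp :: "('a \<Rightarrow> 'b::zero) \<Rightarrow> 'a set" where
  "supp f = {w. f w \<noteq> 0}"

definition word_monom :: "'a list \<Rightarrow> 'a list \<Rightarrow> 'b::{zero,one}" where
  "word_monom u = (\<lambda>w. if w = u then 1 else 0)"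

definition conv :: "('a list \<Rightarrow> 'b::comm_semiring_1) \<Rightarrow> ('a list \<Rightarrow> 'b) \<Rightarrow> 'a list \<Rightarrow> 'b" where
  "conv f g = (\<lambda>w. \<Sum>i\<le>length w. f (take i w) * g (drop i w))"

lemma free_ring2_simps:
  "carrier free_ring2 = {f. finite (supp f)}"
  "monoid.mult free_ring2 = conv"
  "one free_ring2 = word_monom []"
  "zero free_ring2 = (\<lambda>w. 0)"
  "add free_ring2 = (\<lambda>f g w. f w + g w)"
  by (auto simp: free_ring2_def conv_def word_monom_def supp_def fun_eq_iff)

lemma supp_word_monom: "supp (word_monom u :: 'a list \<Rightarrow> 'b::zero_neq_one) = {u}"
  by (auto simp: supp_def word_monom_def)

lemma supp_add: "supp (\<lambda>w. f w + g w) \<subseteq> supp f \<union> supp (g :: 'a \<Rightarrow> 'b::monoid_add)"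
  by (auto simp: supp_def)

lemma supp_sum_word_monom:
  fixes c :: "'c \<Rightarrow> 'b::semiring_1"
  shows "supp (\<lambda>w. \<Sum>a\<in>P. c a * word_monom (u a) w) \<subseteq> u ` P"
proof
  fix w assume "w \<in> supp (\<lambda>w. \<Sum>a\<in>P. c a * word_monom (u a) w)"
  then have "(\<Sum>a\<in>P. c a * word_monom (u a) w) \<noteq> 0" by (simp add: supp_def)
  then obtain a where "a \<in> P" "c a * word_monom (u a) w \<noteq> 0" by (meson sum.neutral)
  then show "w \<in> u ` P" by (auto simp: word_monom_def split: if_splits)
qed

lemma word_monom_expansion:
  fixes f :: "'a list \<Rightarrow> 'b::semiring_1"
  assumes "finite S" "supp f \<subseteq> S"
  shows "f = (\<lambda>w. \<Sum>u\<in>S. f u * word_monom u w)"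
proof (rule ext)
  fix w
  have "(\<Sum>u\<in>S. f u * word_monom u w) = (\<Sum>u\<in>S. if w = u then f u else 0)"
    by (rule sum.cong) (auto simp: word_monom_def)
  also have "\<dots> = f w" using assms by (auto simp: sum.delta supp_def)
  finally show "f w = (\<Sum>u\<in>S. f u * word_monom u w)" by simp
qed

lemma conv_sum_left:
  "conv (\<lambda>w. \<Sum>a\<in>S. c a * F a w) g = (\<lambda>w. \<Sum>a\<in>S. c a * conv (F a) g w)"
  by (simp add: conv_def fun_eq_iff sum_distrib_right sum_distrib_left mult.assoc sum.swap[of _ S])

lemma conv_sum_right:
  "conv g (\<lambda>w. \<Sum>a\<in>S. c a * F a w) = (\<lambda>w. \<Sum>a\<in>S. c a * conv g (F a) w)"
  by (simp add: conv_def fun_eq_iff sum_distrib_right sum_distrib_left mult.assoc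
      mult.left_commute sum.swap[of _ S])

lemma conv_scale_left: "conv (\<lambda>w. k * f w) g = (\<lambda>w. k * conv f g w)"
  by (simp add: conv_def fun_eq_iff sum_distrib_left mult.assoc)

lemma conv_add_left: "conv (\<lambda>w. f w + g w) h = (\<lambda>w. conv f h w + conv g h w)"
  by (simp add: conv_def fun_eq_iff distrib_right sum.distrib)

lemma conv_add_right: "conv h (\<lambda>w. f w + g w) = (\<lambda>w. conv h f w + conv h g w)"
  by (simp add: conv_def fun_eq_iff distrib_left sum.distrib)

lemma conv_word_monom: "conv (word_monom u) (word_monom v) = word_monom (u @ v)"
proof (rule ext)
  fix w
  have "conv (word_monom u) (word_monom v) w
      = (\<Sum>i\<le>length w. if i = length u \<and> w = u @ v then 1 else 0)"
    unfolding conv_def word_monom_def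
    by (rule sum.cong) (auto simp: append_eq_conv_conj)
  also have "\<dots> = word_monom (u @ v) w"
    by (auto simp: word_monom_def sum.delta)
  finally show "conv (word_monom u) (word_monom v) w = word_monom (u @ v) w" .
qed

lemma conv_expansion:
  assumes "finite A" "supp f \<subseteq> A" "finite B" "supp g \<subseteq> B"
  shows "conv f g = (\<lambda>w. \<Sum>u\<in>A. \<Sum>v\<in>B. f u * g v * word_monom (u @ v) w)"
  by (subst word_monom_expansion[OF assms(1,2)], subst word_monom_expansion[OF assms(3,4)])
     (simp add: conv_sum_left conv_sum_right conv_word_monom sum_distrib_left mult.assoc)

lemma conv_word_monom_left:
  assumes "finite C" "supp h \<subseteq> C"
  shows "conv (word_monom p) h = (\<lambda>w. \<Sum>z\<in>C. h z * word_monom (p @ z) w)"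
  by (subst word_monom_expansion[OF assms]) (simp add: conv_sum_right conv_word_monom)

lemma conv_word_monom_right:
  assumes "finite C" "supp h \<subseteq> C"
  shows "conv h (word_monom p) = (\<lambda>w. \<Sum>z\<in>C. h z * word_monom (z @ p) w)"
  by (subst word_monom_expansion[OF assms]) (simp add: conv_sum_left conv_word_monom)

lemma conv_one_left: "finite (supp f) \<Longrightarrow> conv (word_monom []) f = f"
  by (subst conv_word_monom_left[OF _ order_refl], assumption)
     (simp add: word_monom_expansion[symmetric, OF _ order_refl])

lemma conv_one_right: "finite (supp f) \<Longrightarrow> conv f (word_monom []) = f"
  by (subst conv_word_monom_right[OF _ order_refl], assumption)
     (simp add: word_monom_expansion[symmetric, OF _ order_refl])

lemma supp_conv: "supp (conv f g) \<subseteq> (\<lambda>(u, v). u @ v) ` (supp f \<times> supp g)"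
proof
  fix w assume "w \<in> supp (conv f g)"
  then have "(\<Sum>i\<le>length w. f (take i w) * g (drop i w)) \<noteq> 0" by (simp add: supp_def conv_def)
  then obtain i where "f (take i w) * g (drop i w) \<noteq> 0" by (meson sum.neutral)
  then show "w \<in> (\<lambda>(u, v). u @ v) ` (supp f \<times> supp g)"
    by (auto simp: supp_def intro!: image_eqI[of _ _ "(take i w, drop i w)"])
qed

lemma finite_supp_conv: "finite (supp f) \<Longrightarrow> finite (supp g) \<Longrightarrow> finite (supp (conv f g))"
  by (rule finite_subset[OF supp_conv]) auto

lemma conv_assoc:
  assumes f: "finite (supp f)" and g: "finite (supp g)" and h: "finite (supp h)"
  shows "conv (conv f g) h = conv f (conv g h)"
proof -
  have fg: "conv f g = (\<lambda>w. \<Sum>u\<in>supp f. f u * (\<Sum>v\<in>supp g. g v * word_monom (u @ v) w))"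
    by (subst conv_expansion[OF f order_refl g order_refl]) (simp add: sum_distrib_left mult.assoc)
  have gh: "conv g h = (\<lambda>w. \<Sum>v\<in>supp g. g v * (\<Sum>z\<in>supp h. h z * word_monom (v @ z) w))"
    by (subst conv_expansion[OF g order_refl h order_refl]) (simp add: sum_distrib_left mult.assoc)
  have "conv (conv f g) h = (\<lambda>w. \<Sum>u\<in>supp f. \<Sum>v\<in>supp g. \<Sum>z\<in>supp h.
      f u * (g v * (h z * word_monom (u @ v @ z) w)))"
    unfolding fg conv_sum_left conv_word_monom_left[OF h order_refl] by (simp add: sum_distrib_left)
  also have "\<dots> = (\<lambda>w. \<Sum>v\<in>supp g. \<Sum>z\<in>supp h. \<Sum>u\<in>supp f.
      g v * (h z * (f u * word_monom (u @ v @ z) w)))"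
    by (rule ext, subst sum.swap, rule sum.cong[OF refl], subst sum.swap) (simp add: ac_simps)
  also have "\<dots> = conv f (conv g h)"
    unfolding gh conv_sum_right conv_word_monom_right[OF f order_refl] by (simp add: sum_distrib_left)
  finally show ?thesis .
qed

lemma ring_free_ring2: "ring free_ring2"
proof (rule ringI)
  show "abelian_group free_ring2"
  proof (rule abelian_groupI, simp_all add: free_ring2_simps)
    fix x y :: "bool list \<Rightarrow> int" assume "finite (supp x)" "finite (supp y)"
    then show "finite (supp (\<lambda>w. x w + y w))" by (rule finite_subset[OF supp_add, OF finite_UnI])
  next
    show "finite (supp (\<lambda>w. 0))" by (simp add: supp_def)
  next
    fix x :: "bool list \<Rightarrow> int" assume "finite (supp x)"
    then show "\<exists>y. finite (supp y) \<and> (\<lambda>w. y w + x w) = (\<lambda>w. 0)"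
      by (intro exI[of _ "\<lambda>w. - x w"]) (simp add: supp_def)
  qed (auto simp: fun_eq_iff)
next
  show "monoid free_ring2"
    by (rule monoidI)
       (auto simp: free_ring2_simps finite_supp_conv supp_word_monom conv_assoc conv_one_left conv_one_right)
qed (auto simp: free_ring2_simps conv_add_left conv_add_right)

lemma word_monom_closed [simp]: "word_monom u \<in> carrier free_ring2"
  by (simp add: free_ring2_simps supp_word_monom)

lemma mult_word_monom: "word_monom u \<otimes>\<^bsub>free_ring2\<^esub> word_monom v = word_monom (u @ v)"
  by (simp add: free_ring2_simps conv_word_monom)

lemma pow_word_monom: "word_monom [b] [^]\<^bsub>free_ring2\<^esub> k = word_monom (replicate k b)"
proof (induction k)
  case (Suc k)
  then show ?case by (simp add: mult_word_monom replicate_append_same[symmetric])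
qed (simp add: free_ring2_simps)

lemma gen_x_eq: "gen_x = word_monom [True]" and gen_y_eq: "gen_y = word_monom [False]"
  by (auto simp: gen_x_def gen_y_def word_monom_def fun_eq_iff)

lemma free_ring2_finsum:
  assumes "finite A" "F \<in> A \<rightarrow> carrier free_ring2"
  shows "finsum free_ring2 F A = (\<lambda>v. \<Sum>a\<in>A. F a v)"
  using assms
proof (induction A rule: finite_induct)
  case empty
  interpret ring free_ring2 by (rule ring_free_ring2)
  show ?case by (simp add: free_ring2_simps)
next
  case (insert x A)
  interpret ring free_ring2 by (rule ring_free_ring2)
  show ?case using insert by (simp add: finsum_insert free_ring2_simps)
qed

lemma free_ring2_minus:
  assumes "f \<in> carrier free_ring2" "g \<in> carrier free_ring2"
  shows "f \<ominus>\<^bsub>free_ring2\<^esub> g = (\<lambda>w. f w - g w)"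
proof -
  interpret R: ring free_ring2 by (rule ring_free_ring2)
  have "(\<lambda>w. - g w) \<in> carrier free_ring2" "(\<lambda>w. - g w) \<oplus>\<^bsub>free_ring2\<^esub> g = \<zero>\<^bsub>free_ring2\<^esub>"
    using assms by (simp_all add: free_ring2_simps supp_def)
  then have "\<ominus>\<^bsub>free_ring2\<^esub> g = (\<lambda>w. - g w)"
    using assms by (simp add: R.minus_equality)
  then show ?thesis by (simp add: R.minus_eq free_ring2_simps)
qed

lemma free_ring2_ideal_smult:
  assumes "ideal I free_ring2" "h \<in> I"
  shows "(\<lambda>w. k * h w) \<in> I"
proof -
  interpret ideal I free_ring2 by (rule assms(1))
  have "finite (supp h)" using assms(2) by (auto simp: free_ring2_simps dest: Icarr)
  have "(\<lambda>w. k * word_monom [] w) \<in> carrier free_ring2"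
    by (auto simp: free_ring2_simps supp_def word_monom_def intro: finite_subset[of _ "{[]}"])
  then have "(\<lambda>w. k * word_monom [] w) \<otimes>\<^bsub>free_ring2\<^esub> h \<in> I"
    by (rule I_l_closed[OF assms(2)])
  also have "(\<lambda>w. k * word_monom [] w) \<otimes>\<^bsub>free_ring2\<^esub> h = (\<lambda>w. k * h w)"
    using \<open>finite (supp h)\<close> by (simp only: free_ring2_simps conv_scale_left conv_one_left)
  finally show ?thesis .
qed

lemma free_ring2_ideal_sum:
  assumes "ideal I free_ring2" "finite S" "\<And>a. a \<in> S \<Longrightarrow> H a \<in> I"
  shows "(\<lambda>w. \<Sum>a\<in>S. H a w) \<in> I"
  using assms(2,3)
proof (induction S rule: finite_induct)
  case empty
  have "\<zero>\<^bsub>free_ring2\<^esub> \<in> I"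
    by (rule additive_subgroup.zero_closed[OF ideal.axioms(1)[OF assms(1)]])
  then show ?case by (simp add: free_ring2_simps)
next
  case (insert b S)
  have "H b \<oplus>\<^bsub>free_ring2\<^esub> (\<lambda>w. \<Sum>a\<in>S. H a w) \<in> I"
    using insert.IH insert.prems
    by (intro additive_subgroup.a_closed[OF ideal.axioms(1)[OF assms(1)]]) auto
  moreover have "H b \<oplus>\<^bsub>free_ring2\<^esub> (\<lambda>w. \<Sum>a\<in>S. H a w) = (\<lambda>w. \<Sum>a\<in>insert b S. H a w)"
    using insert.hyps by (simp add: free_ring2_simps)
  ultimately show ?case by simp
qed

section \<open>The shift representation\<close>

text \<open>Reading \<open>w\<close> from the left, \<open>x\<close> steps from \<open>i\<close> to \<open>i - 1\<close> and \<open>y\<close> from \<open>i\<close> to \<open>i + 1\<close>,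
  never leaving \<open>{0..<n}\<close>; \<open>walk n w i j\<close> says that the walk started at \<open>i\<close> ends at \<open>j\<close>, i.e.
  that the \<open>(i, j)\<close> entry of the product of lower (for \<open>x\<close>) and upper (for \<open>y\<close>) shift
  matrices spelled by \<open>w\<close> is \<open>1\<close>.\<close>

fun walk :: "nat \<Rightarrow> bool list \<Rightarrow> nat \<Rightarrow> nat \<Rightarrow> bool" where
  "walk n [] i j = (i = j)"
| "walk n (True # w) i j = (0 < i \<and> walk n w (i - 1) j)"
| "walk n (False # w) i j = (Suc i < n \<and> walk n w (Suc i) j)"

lemma walk_append:
  assumes "i < n"
  shows "(of_bool (walk n (u @ v) i j) :: 'b::semiring_1)
    = (\<Sum>k<n. of_bool (walk n u i k) * of_bool (walk n v k j))"
  using assms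
proof (induction u arbitrary: i)
  case Nil
  have "(\<Sum>k<n. of_bool (walk n [] i k) * of_bool (walk n v k j))
      = (\<Sum>k<n. if i = k then (of_bool (walk n v k j) :: 'b) else 0)"
    by (rule sum.cong) auto
  then show ?case using Nil by simp
next
  case (Cons b u)
  show ?case
  proof (cases b)
    case True
    then show ?thesis using Cons by (cases "0 < i") auto
  next
    case False
    then show ?thesis using Cons by (cases "Suc i < n") auto
  qed
qed

lemma walk_replicate_True:
  "walk n (replicate k True @ w) i j = (k \<le> i \<and> walk n w (i - k) j)"
proof (induction k arbitrary: i)
  case (Suc k)
  have "walk n (replicate (Suc k) True @ w) i j = (0 < i \<and> walk n (replicate k True @ w) (i - 1) j)"
    by (simp only: replicate_Suc append_Cons walk.simps)
  also have "\<dots> = (Suc k \<le> i \<and> walk n w (i - Suc k) j)"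
    by (cases i) (simp_all only: Suc.IH, auto)
  finally show ?case .
qed simp

lemma walk_replicate_False:
  "i < n \<Longrightarrow> walk n (replicate k False @ w) i j = (i + k < n \<and> walk n w (i + k) j)"
proof (induction k arbitrary: i)
  case (Suc k)
  have "walk n (replicate (Suc k) False @ w) i j = (Suc i < n \<and> walk n (replicate k False @ w) (Suc i) j)"
    by (simp only: replicate_Suc append_Cons walk.simps)
  also have "\<dots> = (i + Suc k < n \<and> walk n w (i + Suc k) j)"
    using Suc.IH[of "Suc i"] by auto
  finally show ?case .
qed simp

definition walk_mat :: "nat \<Rightarrow> bool list \<Rightarrow> 'b::zero_neq_one mat" where
  "walk_mat n w = mat n n (\<lambda>(i, j). of_bool (walk n w i j))"

definition mat_of_free :: "nat \<Rightarrow> (bool list \<Rightarrow> 'b::comm_semiring_1) \<Rightarrow> 'b mat" where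
  "mat_of_free n f = mat n n (\<lambda>(i, j). \<Sum>w\<in>supp f. f w * of_bool (walk n w i j))"

lemma mat_of_free_supset:
  assumes "finite S" "supp f \<subseteq> S"
  shows "mat_of_free n f = mat n n (\<lambda>(i, j). \<Sum>w\<in>S. f w * of_bool (walk n w i j))"
  unfolding mat_of_free_def
  by (rule cong[OF refl, of _ _ "mat n n"], rule ext, clarify, rule sum.mono_neutral_left)
     (use assms in \<open>auto simp: supp_def\<close>)

lemma sum_word_monom_mult:
  fixes b :: "'a list \<Rightarrow> 'b::semiring_1"
  assumes "finite S"
  shows "(\<Sum>w\<in>S. word_monom u w * b w) = (if u \<in> S then b u else 0)"
proof -
  have "(\<Sum>w\<in>S. word_monom u w * b w) = (\<Sum>w\<in>S. if u = w then b w else 0)"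
    by (rule sum.cong) (simp_all add: word_monom_def)
  then show ?thesis using assms by (simp add: sum.delta)
qed

lemma mat_of_free_sum_word_monom:
  assumes "finite P"
  shows "mat_of_free n (\<lambda>w. \<Sum>a\<in>P. c a * word_monom (u a) w)
    = mat n n (\<lambda>(i, j). \<Sum>a\<in>P. c a * of_bool (walk n (u a) i j))"
proof -
  have fin: "finite (u ` P)" using assms by simp
  have entry: "(\<Sum>w\<in>u ` P. (\<Sum>a\<in>P. c a * word_monom (u a) w) * of_bool (walk n w i j))
      = (\<Sum>a\<in>P. c a * of_bool (walk n (u a) i j))" for i j
  proof -
    have "(\<Sum>w\<in>u ` P. (\<Sum>a\<in>P. c a * word_monom (u a) w) * of_bool (walk n w i j))
        = (\<Sum>a\<in>P. c a * (\<Sum>w\<in>u ` P. word_monom (u a) w * of_bool (walk n w i j)))"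
      by (simp add: sum_distrib_right sum_distrib_left sum.swap[of _ "u ` P"] mult.assoc
          del: sum_mult_of_bool_eq)
    also have "\<dots> = (\<Sum>a\<in>P. c a * of_bool (walk n (u a) i j))"
      by (rule sum.cong[OF refl]) (simp add: sum_word_monom_mult[OF fin] del: sum_mult_of_bool_eq)
    finally show ?thesis .
  qed
  show ?thesis
    unfolding mat_of_free_supset[OF fin supp_sum_word_monom] entry ..
qed

lemma mat_of_free_word_monom: "mat_of_free n (word_monom u :: bool list \<Rightarrow> 'b::comm_semiring_1) = walk_mat n u"
  by (simp add: mat_of_free_def walk_mat_def supp_word_monom sum_word_monom_mult del: sum_mult_of_bool_eq)
     (simp add: word_monom_def)

lemma mat_of_free_add:
  assumes "finite (supp f)" "finite (supp g)"
  shows "mat_of_free n (\<lambda>w. f w + g w) = mat_of_free n f + mat_of_free n g"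
proof -
  let ?S = "supp f \<union> supp g"
  have "finite ?S" using assms by auto
  show ?thesis
    unfolding mat_of_free_supset[OF \<open>finite ?S\<close> supp_add] mat_of_free_supset[OF \<open>finite ?S\<close> Un_upper1]
      mat_of_free_supset[OF \<open>finite ?S\<close> Un_upper2]
    by (rule eq_matI) (auto simp: distrib_right sum.distrib)
qed

lemma mat_of_free_conv:
  assumes f: "finite (supp f)" and g: "finite (supp g)"
  shows "mat_of_free n (conv f g) = mat_of_free n f * mat_of_free n g"
proof -
  let ?A = "supp f" and ?B = "supp g"
  have "mat_of_free n (conv f g) = mat_of_free n (\<lambda>w. \<Sum>(u, v)\<in>?A \<times> ?B. f u * g v * word_monom (u @ v) w)"
    by (simp add: conv_expansion[OF f order_refl g order_refl] sum.cartesian_product)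
  also have "\<dots> = mat n n (\<lambda>(i, j). \<Sum>(u, v)\<in>?A \<times> ?B. f u * g v * of_bool (walk n (u @ v) i j))"
    using mat_of_free_sum_word_monom[of "?A \<times> ?B" n "\<lambda>(u, v). f u * g v" "\<lambda>(u, v). u @ v"] assms
    by (simp add: case_prod_beta')
  also have "\<dots> = mat_of_free n f * mat_of_free n g"
  proof (rule eq_matI)
    fix i j assume "i < dim_row (mat_of_free n f * mat_of_free n g)" "j < dim_col (mat_of_free n f * mat_of_free n g)"
    then have i: "i < n" and j: "j < n" by (auto simp: mat_of_free_def)
    let ?F = "\<lambda>u v k. (f u * of_bool (walk n u i k)) * (g v * of_bool (walk n v k j))"
    have "(\<Sum>(u, v)\<in>?A \<times> ?B. f u * g v * of_bool (walk n (u @ v) i j)) = (\<Sum>u\<in>?A. \<Sum>v\<in>?B. \<Sum>k<n. ?F u v k)"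
      unfolding sum.cartesian_product[symmetric]
      by (intro sum.cong refl)
         (simp add: walk_append[OF i] sum_distrib_left mult_ac del: sum_mult_of_bool_eq sum_of_bool_mult_eq)
    also have "\<dots> = (\<Sum>u\<in>?A. \<Sum>k<n. \<Sum>v\<in>?B. ?F u v k)"
      by (rule sum.cong[OF refl], rule sum.swap)
    also have "\<dots> = (\<Sum>k<n. (\<Sum>u\<in>?A. f u * of_bool (walk n u i k)) * (\<Sum>v\<in>?B. g v * of_bool (walk n v k j)))"
      by (subst sum.swap) (simp add: sum_product)
    finally have "(\<Sum>(u, v)\<in>?A \<times> ?B. f u * g v * of_bool (walk n (u @ v) i j))
        = (\<Sum>k<n. (\<Sum>u\<in>?A. f u * of_bool (walk n u i k)) * (\<Sum>v\<in>?B. g v * of_bool (walk n v k j)))" .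
    then show "mat n n (\<lambda>(i, j). \<Sum>(u, v)\<in>?A \<times> ?B. f u * g v * of_bool (walk n (u @ v) i j)) $$ (i, j)
        = (mat_of_free n f * mat_of_free n g) $$ (i, j)"
      using i j by (simp add: mat_of_free_def scalar_prod_def lessThan_atLeast0)
  qed (auto simp: mat_of_free_def)
  finally show ?thesis .
qed

lemma ring_hom_mat_of_free: "ring_hom_ring free_ring2 (ring_mat TYPE(int) n ()) (mat_of_free n)"
proof (rule ring_hom_ringI[OF ring_free_ring2 ring_mat])
  fix f g assume "f \<in> carrier free_ring2" "g \<in> carrier free_ring2"
  then show "mat_of_free n (f \<otimes>\<^bsub>free_ring2\<^esub> g) = mat_of_free n f \<otimes>\<^bsub>ring_mat TYPE(int) n ()\<^esub> mat_of_free n g"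
    and "mat_of_free n (f \<oplus>\<^bsub>free_ring2\<^esub> g) = mat_of_free n f \<oplus>\<^bsub>ring_mat TYPE(int) n ()\<^esub> mat_of_free n g"
    by (simp_all add: free_ring2_simps ring_mat_simps mat_of_free_conv mat_of_free_add)
next
  show "mat_of_free n \<one>\<^bsub>free_ring2\<^esub> = \<one>\<^bsub>ring_mat TYPE(int) n ()\<^esub>"
    by (rule eq_matI) (auto simp: free_ring2_simps ring_mat_simps mat_of_free_word_monom walk_mat_def)
qed (auto simp: ring_mat_simps mat_of_free_def)

definition unit_word :: "nat \<Rightarrow> nat \<Rightarrow> nat \<Rightarrow> bool list" where
  "unit_word n p q = replicate p True @ replicate (n - 1) False @ replicate (n - 1) True @ replicate q False"

lemma walk_unit_word:
  assumes "p < n" "q < n" "i < n"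
  shows "walk n (unit_word n p q) i j \<longleftrightarrow> i = p \<and> j = q"
proof -
  have "walk n (unit_word n p q) i j
      \<longleftrightarrow> p \<le> i \<and> walk n (replicate (n - 1) False @ replicate (n - 1) True @ replicate q False) (i - p) j"
    by (simp add: unit_word_def walk_replicate_True)
  also have "\<dots> \<longleftrightarrow> i = p \<and> walk n (replicate (n - 1) True @ replicate q False) (n - 1) j"
    using assms by (auto simp: walk_replicate_False)
  also have "\<dots> \<longleftrightarrow> i = p \<and> j = q"
    using assms walk_replicate_False[of 0 n q "[]"] by (auto simp: walk_replicate_True)
  finally show ?thesis .
qed

definition free_of_mat :: "nat \<Rightarrow> 'b mat \<Rightarrow> bool list \<Rightarrow> 'b::comm_semiring_1" where
  "free_of_mat n A = (\<lambda>w. \<Sum>a\<in>{..<n} \<times> {..<n}. A $$ a * word_monom (case_prod (unit_word n) a) w)"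

lemma free_of_mat_closed: "free_of_mat n A \<in> carrier free_ring2"
  unfolding free_of_mat_def free_ring2_simps
  by (auto intro: finite_subset[OF supp_sum_word_monom])

lemma mat_of_free_free_of_mat:
  assumes "A \<in> carrier_mat n n"
  shows "mat_of_free n (free_of_mat n A) = A"
proof (rule eq_matI)
  fix i j assume "i < dim_row A" "j < dim_col A"
  then have i: "i < n" and j: "j < n" using assms by auto
  have "(\<Sum>a\<in>{..<n} \<times> {..<n}. A $$ a * of_bool (walk n (case_prod (unit_word n) a) i j))
      = (\<Sum>a\<in>{..<n} \<times> {..<n}. if a = (i, j) then A $$ a else 0)"
    by (rule sum.cong) (auto simp: walk_unit_word i)
  also have "\<dots> = A $$ (i, j)" using i j by (simp add: sum.delta')
  finally show "mat_of_free n (free_of_mat n A) $$ (i, j) = A $$ (i, j)"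
    using i j by (simp add: free_of_mat_def mat_of_free_sum_word_monom del: sum_mult_of_bool_eq)
qed (use assms in \<open>auto simp: mat_of_free_def\<close>)

lemma mat_of_free_carrier: "mat_of_free n f \<in> carrier_mat n n"
  unfolding mat_of_free_def by (rule mat_carrier)

lemma mat_of_free_surj: "mat_of_free n ` carrier free_ring2 = carrier (ring_mat TYPE(int) n ())"
proof -
  have "carrier_mat n n \<subseteq> mat_of_free n ` carrier free_ring2"
    using mat_of_free_free_of_mat free_of_mat_closed by (metis image_eqI subsetI)
  then show ?thesis
    using mat_of_free_carrier by (auto simp: ring_mat_simps)
qed

lemma free_of_mat_mat_of_free:
  "free_of_mat n (mat_of_free n f) w = (\<Sum>u\<in>supp f. f u * free_of_mat n (walk_mat n u) w)"
proof -
  let ?P = "{..<n} \<times> {..<n}" and ?m = "\<lambda>a. word_monom (case_prod (unit_word n) a) w"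
  have "free_of_mat n (mat_of_free n f) w = (\<Sum>a\<in>?P. \<Sum>u\<in>supp f. f u * (walk_mat n u $$ a * ?m a))"
    unfolding free_of_mat_def
    by (rule sum.cong[OF refl])
       (auto simp: mat_of_free_def walk_mat_def sum_distrib_right mult.assoc
         simp del: sum_mult_of_bool_eq sum_of_bool_mult_eq)
  also have "\<dots> = (\<Sum>u\<in>supp f. f u * free_of_mat n (walk_mat n u) w)"
    by (subst sum.swap) (simp add: free_of_mat_def sum_distrib_left)
  finally show ?thesis .
qed

lemma free_ring2_decomposition:
  assumes "f \<in> carrier free_ring2"
  shows "f = (\<lambda>w. (\<Sum>u\<in>supp f. f u * (word_monom u w - free_of_mat n (walk_mat n u) w))
    + free_of_mat n (mat_of_free n f) w)"
  using assms word_monom_expansion[of "supp f" f]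
  by (simp add: free_ring2_simps free_of_mat_mat_of_free right_diff_distrib sum_subtractf)

section \<open>Matrix units in a ring satisfying the relations\<close>

locale shift_relations = ring Q for Q (structure) +
  fixes n :: nat and X Y
  assumes two_le_n: "2 \<le> n"
    and X_closed [simp]: "X \<in> carrier Q" and Y_closed [simp]: "Y \<in> carrier Q"
    and X_nilpotent: "X [^] n = \<zero>" and Y_nilpotent: "Y [^] n = \<zero>"
    and XY_relation: "X \<otimes> Y \<oplus> Y [^] (n - 1) \<otimes> X [^] (n - 1) = \<one>"
begin

definition A :: 'a where "A = Y [^] (n - 1) \<otimes> X [^] (n - 1)"

definition C :: 'a where "C = \<one> \<ominus> Y \<otimes> X"

definition E :: "nat \<Rightarrow> nat \<Rightarrow> 'a" where "E p q = X [^] p \<otimes> A \<otimes> Y [^] q"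

lemma A_closed [simp]: "A \<in> carrier Q" and C_closed [simp]: "C \<in> carrier Q"
  and E_closed [simp]: "E p q \<in> carrier Q"
  by (auto simp: A_def C_def E_def)

lemma X_Y_plus_A: "X \<otimes> Y \<oplus> A = \<one>"
  using XY_relation by (simp add: A_def)

lemma Y_X_plus_C: "Y \<otimes> X \<oplus> C = \<one>"
  by (simp add: C_def minus_eq add.m_lcomm r_neg)

lemma A_X: "A \<otimes> X = \<zero>"
proof -
  have "Suc (n - 1) = n" using two_le_n by simp
  then have "X [^] (n - 1) \<otimes> X = \<zero>" using X_nilpotent nat_pow_Suc[of X "n - 1"] by simp
  then show ?thesis by (simp add: A_def m_assoc)
qed

lemma X_Y_X: "X \<otimes> (Y \<otimes> X) = X"
proof -
  have "(X \<otimes> Y \<oplus> A) \<otimes> X = X" by (simp add: X_Y_plus_A)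
  then show ?thesis by (simp add: l_distr m_assoc A_X)
qed

lemma X_C: "X \<otimes> C = \<zero>"
proof -
  have "X \<otimes> (Y \<otimes> X \<oplus> C) = X" by (simp add: Y_X_plus_C)
  then have "X \<oplus> X \<otimes> C = X" by (simp add: r_distr X_Y_X)
  then show ?thesis by simp
qed

lemma X_pow_C: "0 < (k::nat) \<Longrightarrow> X [^] k \<otimes> C = \<zero>"
  by (cases k) (auto simp: m_assoc X_C)

text \<open>For \<open>s < n - 1\<close>: \<open>A y^s C = y^(n-1) x^(n-1-s) (x^s y^s C)\<close>, and \<open>x C = 0\<close>.\<close>

lemma A_Y_pow_C_step:
  assumes "s < n - 1" "X [^] s \<otimes> (Y [^] s \<otimes> C) = C"
  shows "A \<otimes> (Y [^] s \<otimes> C) = \<zero>"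
proof -
  have "X [^] (n - 1) = X [^] (n - 1 - s) \<otimes> X [^] s"
    using assms(1) by (simp add: nat_pow_mult)
  then have "A \<otimes> (Y [^] s \<otimes> C) = Y [^] (n - 1) \<otimes> (X [^] (n - 1 - s) \<otimes> (X [^] s \<otimes> (Y [^] s \<otimes> C)))"
    by (simp add: A_def m_assoc)
  also have "\<dots> = \<zero>" using assms by (simp add: X_pow_C)
  finally show ?thesis .
qed

lemma X_pow_Y_pow_C: "s \<le> n - 1 \<Longrightarrow> X [^] s \<otimes> (Y [^] s \<otimes> C) = C"
proof (induction s)
  case (Suc s)
  then have IH: "X [^] s \<otimes> (Y [^] s \<otimes> C) = C" by simp
  have "C = X [^] s \<otimes> ((X \<otimes> Y \<oplus> A) \<otimes> (Y [^] s \<otimes> C))"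
    by (simp add: X_Y_plus_A IH)
  also have "\<dots> = X [^] s \<otimes> (X \<otimes> (Y \<otimes> (Y [^] s \<otimes> C))) \<oplus> X [^] s \<otimes> (A \<otimes> (Y [^] s \<otimes> C))"
    by (simp add: l_distr r_distr m_assoc)
  also have "\<dots> = X [^] Suc s \<otimes> (Y [^] Suc s \<otimes> C)"
    using A_Y_pow_C_step[OF _ IH] Suc.prems nat_pow_Suc[of X s] nat_pow_Suc2[of Y s]
    by (simp add: m_assoc del: nat_pow_Suc)
  finally show ?case by simp
qed simp

lemma A_Y_pow_C: "s < n - 1 \<Longrightarrow> A \<otimes> (Y [^] s \<otimes> C) = \<zero>"
  by (simp add: A_Y_pow_C_step X_pow_Y_pow_C)

lemma sum_E_diag_telescope: "(\<Oplus>p\<in>{..<k}. E p p) \<oplus> X [^] k \<otimes> Y [^] k = \<one>"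
proof (induction k)
  case (Suc k)
  have "X [^] k \<otimes> Y [^] k = X [^] k \<otimes> ((X \<otimes> Y \<oplus> A) \<otimes> Y [^] k)"
    by (simp add: X_Y_plus_A)
  also have "\<dots> = E k k \<oplus> X [^] Suc k \<otimes> Y [^] Suc k"
    using nat_pow_Suc[of X k] nat_pow_Suc2[of Y k]
    by (simp add: l_distr r_distr m_assoc E_def a_comm del: nat_pow_Suc)
  finally show ?case
    using Suc by (simp del: nat_pow_Suc add: lessThan_Suc finsum_insert a_ac)
qed simp

lemma sum_E_diag: "(\<Oplus>p\<in>{..<n}. E p p) = \<one>"
  using sum_E_diag_telescope[of n] by (simp add: X_nilpotent)

lemma E_mult_X: "i < n \<Longrightarrow> E p i \<otimes> X = (if i = 0 then \<zero> else E p (i - 1))"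
proof (cases i)
  case 0
  then show ?thesis by (simp add: E_def m_assoc A_X)
next
  case (Suc k)
  assume "i < n"
  then have "A \<otimes> (Y [^] k \<otimes> C) = \<zero>" using Suc by (intro A_Y_pow_C) simp
  then have "E p k = E p k \<otimes> (Y \<otimes> X \<oplus> C)"
    by (simp add: Y_X_plus_C)
  also have "\<dots> = E p (Suc k) \<otimes> X"
    using \<open>A \<otimes> (Y [^] k \<otimes> C) = \<zero>\<close> by (simp add: E_def r_distr m_assoc)
  finally show ?thesis using Suc by simp
qed

lemma E_mult_Y:
  assumes "i < n"
  shows "E p i \<otimes> Y = (if Suc i < n then E p (Suc i) else \<zero>)"
proof -
  have "E p i \<otimes> Y = X [^] p \<otimes> A \<otimes> Y [^] Suc i"
    by (simp add: E_def m_assoc)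
  moreover have "Y [^] Suc i = \<zero>" if "\<not> Suc i < n"
    using that assms Y_nilpotent by (metis Suc_leI le_antisym not_less)
  ultimately show ?thesis
    by (simp add: E_def del: nat_pow_Suc)
qed

primrec word_image :: "bool list \<Rightarrow> 'a" where
  "word_image [] = \<one>"
| "word_image (b # w) = (if b then X else Y) \<otimes> word_image w"

lemma word_image_closed [simp]: "word_image w \<in> carrier Q"
  by (induction w) auto

lemma E_mult_word_image:
  "i < n \<Longrightarrow> E p i \<otimes> word_image w = (\<Oplus>j\<in>{..<n}. if walk n w i j then E p j else \<zero>)"
proof (induction w arbitrary: i)
  case Nil
  then show ?case by (simp add: finsum_singleton)
next
  case (Cons b w)
  have "E p i \<otimes> word_image (b # w) = (E p i \<otimes> (if b then X else Y)) \<otimes> word_image w"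
    by (simp add: m_assoc)
  with Cons show ?case
    by (cases b) (auto simp: E_mult_X E_mult_Y)
qed

lemma word_image_eq_sum_E:
  "word_image w = (\<Oplus>i\<in>{..<n}. \<Oplus>j\<in>{..<n}. if walk n w i j then E i j else \<zero>)"
proof -
  have "word_image w = (\<Oplus>i\<in>{..<n}. E i i) \<otimes> word_image w"
    by (simp add: sum_E_diag)
  also have "\<dots> = (\<Oplus>i\<in>{..<n}. E i i \<otimes> word_image w)"
    by (rule finsum_ldistr) auto
  also have "\<dots> = (\<Oplus>i\<in>{..<n}. \<Oplus>j\<in>{..<n}. if walk n w i j then E i j else \<zero>)"
    by (rule finsum_cong') (auto simp: E_mult_word_image)
  finally show ?thesis .
qed

lemma word_image_append: "word_image (u @ v) = word_image u \<otimes> word_image v"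
  by (induction u) (auto simp: m_assoc)

lemma word_image_replicate: "word_image (replicate k b) = (if b then X else Y) [^] k"
proof (induction k)
  case (Suc k)
  have "(if b then X else Y) [^] Suc k = (if b then X else Y) \<otimes> (if b then X else Y) [^] k"
    by (rule nat_pow_Suc2) simp
  then show ?case by (simp only: replicate_Suc word_image.simps Suc.IH)
qed simp

lemma word_image_unit_word: "word_image (unit_word n p q) = E p q"
  by (simp add: unit_word_def word_image_append word_image_replicate E_def A_def m_assoc)

end


section \<open>The kernel of the shift representation\<close>

lemma relators_eq:
  "relators n = {word_monom (replicate n True), word_monom (replicate n False),
    word_monom [True, False] \<oplus>\<^bsub>free_ring2\<^esub> word_monom (replicate (n - 1) False @ replicate (n - 1) True)
      \<ominus>\<^bsub>free_ring2\<^esub> \<one>\<^bsub>free_ring2\<^esub>}"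
  by (simp add: relators_def gen_x_eq gen_y_eq pow_word_monom mult_word_monom)

lemma relators_closed: "relators n \<subseteq> carrier free_ring2"
proof -
  interpret ring free_ring2 by (rule ring_free_ring2)
  show ?thesis by (simp add: relators_eq)
qed

lemma relators_in_kernel:
  assumes "2 \<le> n"
  shows "relators n \<subseteq> a_kernel free_ring2 (ring_mat TYPE(int) n ()) (mat_of_free n)"
proof -
  interpret R: ring free_ring2 by (rule ring_free_ring2)
  interpret S: ring "ring_mat TYPE(int) n ()" by (rule ring_mat)
  interpret h: ring_hom_ring free_ring2 "ring_mat TYPE(int) n ()" "mat_of_free n"
    by (rule ring_hom_mat_of_free)
  let ?u = "replicate (n - 1) False @ replicate (n - 1) True"
  have "walk_mat n [True, False] + walk_mat n ?u = (1\<^sub>m n :: int mat)"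
  proof (rule eq_matI)
    fix i j assume "i < dim_row (1\<^sub>m n :: int mat)" "j < dim_col (1\<^sub>m n :: int mat)"
    then have i: "i < n" and j: "j < n" by auto
    have "walk n [True, False] i j \<longleftrightarrow> 0 < i \<and> i = j" using i by auto
    moreover have "walk n ?u i j \<longleftrightarrow> i = 0 \<and> j = 0"
      using i assms by (auto simp: walk_replicate_False walk_replicate_True[where w = "[]", simplified])
    ultimately have "(walk_mat n [True, False] + walk_mat n ?u) $$ (i, j)
        = of_bool (0 < i \<and> i = j) + (of_bool (i = 0 \<and> j = 0) :: int)"
      using i j by (simp add: walk_mat_def)
    then show "(walk_mat n [True, False] + walk_mat n ?u) $$ (i, j) = (1\<^sub>m n :: int mat) $$ (i, j)"
      using i j by (cases "i = 0") auto
  qed (auto simp: walk_mat_def)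
  then have "walk_mat n [True, False] \<oplus>\<^bsub>ring_mat TYPE(int) n ()\<^esub> walk_mat n ?u = \<one>\<^bsub>ring_mat TYPE(int) n ()\<^esub>"
    by (simp add: ring_mat_simps)
  then have "mat_of_free n (word_monom [True, False] \<oplus>\<^bsub>free_ring2\<^esub> word_monom ?u
      \<ominus>\<^bsub>free_ring2\<^esub> \<one>\<^bsub>free_ring2\<^esub>) = \<zero>\<^bsub>ring_mat TYPE(int) n ()\<^esub>"
    by (simp add: R.minus_eq S.minus_eq mat_of_free_word_monom S.r_neg)
  moreover have "walk_mat n (replicate n True) = (0\<^sub>m n n :: int mat)"
    by (rule eq_matI) (auto simp: walk_mat_def walk_replicate_True[where w = "[]", simplified])
  moreover have "walk_mat n (replicate n False) = (0\<^sub>m n n :: int mat)"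
    by (rule eq_matI) (auto simp: walk_mat_def walk_replicate_False[where w = "[]", simplified])
  ultimately have "mat_of_free n r = \<zero>\<^bsub>ring_mat TYPE(int) n ()\<^esub>" if "r \<in> relators n" for r
    using that unfolding relators_eq by (auto simp: mat_of_free_word_monom ring_mat_simps)
  then show ?thesis
    using relators_closed unfolding a_kernel_def' by blast
qed

lemma free_of_mat_eq_double_sum:
  "free_of_mat n A w = (\<Sum>i<n. \<Sum>j<n. A $$ (i, j) * word_monom (unit_word n i j) w)"
  unfolding free_of_mat_def sum.cartesian_product by (simp add: case_prod_unfold)

lemma free_of_walk_mat_eq_finsum:
  "free_of_mat n (walk_mat n w) = (\<Oplus>\<^bsub>free_ring2\<^esub>i\<in>{..<n}. \<Oplus>\<^bsub>free_ring2\<^esub>j\<in>{..<n}.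
    if walk n w i j then word_monom (unit_word n i j) else \<zero>\<^bsub>free_ring2\<^esub>)"
proof -
  interpret ring free_ring2 by (rule ring_free_ring2)
  let ?F = "\<lambda>i j. if walk n w i j then word_monom (unit_word n i j) else \<zero>\<^bsub>free_ring2\<^esub>"
  have inner: "(\<Oplus>\<^bsub>free_ring2\<^esub>j\<in>{..<n}. ?F i j) = (\<lambda>v. \<Sum>j<n. ?F i j v)" for i
    by (rule free_ring2_finsum) auto
  have "(\<Oplus>\<^bsub>free_ring2\<^esub>i\<in>{..<n}. \<Oplus>\<^bsub>free_ring2\<^esub>j\<in>{..<n}. ?F i j)
      = (\<lambda>v. \<Sum>i<n. (\<Oplus>\<^bsub>free_ring2\<^esub>j\<in>{..<n}. ?F i j) v)"
    by (rule free_ring2_finsum) (auto intro: finsum_closed)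
  also have "\<dots> = free_of_mat n (walk_mat n w)"
    unfolding inner free_of_mat_eq_double_sum
    by (intro ext sum.cong refl) (simp add: walk_mat_def free_ring2_simps)
  finally show ?thesis ..
qed

lemma shift_relations_quotient:
  assumes "2 \<le> n"
  shows "shift_relations (free_ring2 Quot genideal free_ring2 (relators n)) n
    (genideal free_ring2 (relators n) +>\<^bsub>free_ring2\<^esub> gen_x) (genideal free_ring2 (relators n) +>\<^bsub>free_ring2\<^esub> gen_y)"
    (is "shift_relations ?Q n (?\<pi> gen_x) (?\<pi> gen_y)")
proof -
  let ?I = "genideal free_ring2 (relators n)"
  interpret R: ring free_ring2 by (rule ring_free_ring2)
  interpret I: ideal ?I free_ring2 by (rule R.genideal_ideal[OF relators_closed])
  interpret Q: ring ?Q by (rule I.quotient_is_ring)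
  interpret \<pi>: ring_hom_ring free_ring2 ?Q "?\<pi>" by (rule I.rcos_ring_hom_ring)
  have relator: "?\<pi> r = \<zero>\<^bsub>?Q\<^esub>" if "r \<in> relators n" for r
  proof -
    have "r \<in> ?I" using R.genideal_self[OF relators_closed] that by blast
    then have "?\<pi> r = ?I" by (rule R.a_rcos_zero[OF I.is_ideal])
    then show ?thesis unfolding FactRing_def by (simp only: ring.select_convs)
  qed
  have "?\<pi> (gen_x [^]\<^bsub>free_ring2\<^esub> n) = \<zero>\<^bsub>?Q\<^esub>" "?\<pi> (gen_y [^]\<^bsub>free_ring2\<^esub> n) = \<zero>\<^bsub>?Q\<^esub>"
    by (rule relator, simp add: relators_def)+
  then have X_nilpotent: "?\<pi> gen_x [^]\<^bsub>?Q\<^esub> n = \<zero>\<^bsub>?Q\<^esub>"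
    and Y_nilpotent: "?\<pi> gen_y [^]\<^bsub>?Q\<^esub> n = \<zero>\<^bsub>?Q\<^esub>"
    by (simp_all add: gen_x_eq gen_y_eq \<pi>.hom_nat_pow)
  let ?r = "gen_x \<otimes>\<^bsub>free_ring2\<^esub> gen_y \<oplus>\<^bsub>free_ring2\<^esub>
    gen_y [^]\<^bsub>free_ring2\<^esub> (n - 1) \<otimes>\<^bsub>free_ring2\<^esub> gen_x [^]\<^bsub>free_ring2\<^esub> (n - 1)"
  have r_closed: "?r \<in> carrier free_ring2" by (simp add: gen_x_eq gen_y_eq)
  have "?\<pi> (?r \<ominus>\<^bsub>free_ring2\<^esub> \<one>\<^bsub>free_ring2\<^esub>) = \<zero>\<^bsub>?Q\<^esub>"
    by (rule relator) (simp add: relators_def)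
  then have "?\<pi> ?r \<ominus>\<^bsub>?Q\<^esub> \<one>\<^bsub>?Q\<^esub> = \<zero>\<^bsub>?Q\<^esub>"
    using r_closed by (simp add: R.minus_eq Q.minus_eq)
  moreover have "?\<pi> ?r = (?\<pi> ?r \<ominus>\<^bsub>?Q\<^esub> \<one>\<^bsub>?Q\<^esub>) \<oplus>\<^bsub>?Q\<^esub> \<one>\<^bsub>?Q\<^esub>"
    using r_closed by (simp add: Q.minus_eq Q.a_assoc Q.l_neg)
  ultimately have "?\<pi> ?r = \<one>\<^bsub>?Q\<^esub>" by simp
  then have relation: "?\<pi> gen_x \<otimes>\<^bsub>?Q\<^esub> ?\<pi> gen_y \<oplus>\<^bsub>?Q\<^esub>
      ?\<pi> gen_y [^]\<^bsub>?Q\<^esub> (n - 1) \<otimes>\<^bsub>?Q\<^esub> ?\<pi> gen_x [^]\<^bsub>?Q\<^esub> (n - 1) = \<one>\<^bsub>?Q\<^esub>"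
    by (simp add: gen_x_eq gen_y_eq \<pi>.hom_nat_pow)
  show ?thesis
    using assms X_nilpotent Y_nilpotent relation
    by (intro shift_relations.intro shift_relations_axioms.intro Q.ring_axioms)
       (simp_all add: gen_x_eq gen_y_eq)
qed

context shift_relations
begin

lemma hom_word_monom:
  assumes "ring_hom_ring free_ring2 Q h" "h gen_x = X" "h gen_y = Y"
  shows "h (word_monom u) = word_image u"
proof -
  interpret h: ring_hom_ring free_ring2 Q h by fact
  show ?thesis
  proof (induction u)
    case Nil
    show ?case by (simp flip: free_ring2_simps(3))
  next
    case (Cons b u)
    have "word_monom (b # u) = word_monom [b] \<otimes>\<^bsub>free_ring2\<^esub> word_monom u"
      by (simp add: mult_word_monom)
    moreover have "h (word_monom [b]) = (if b then X else Y)"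
      using assms(2,3) by (simp add: gen_x_eq gen_y_eq)
    ultimately show ?case using Cons by simp
  qed
qed

lemma hom_free_of_walk_mat:
  assumes "ring_hom_ring free_ring2 Q h" "h gen_x = X" "h gen_y = Y"
  shows "h (free_of_mat n (walk_mat n w)) = word_image w"
proof -
  interpret h: ring_hom_ring free_ring2 Q h by fact
  let ?F = "\<lambda>i j. if walk n w i j then word_monom (unit_word n i j) else \<zero>\<^bsub>free_ring2\<^esub>"
  have row: "h (\<Oplus>\<^bsub>free_ring2\<^esub>j\<in>{..<n}. ?F i j) = (\<Oplus>j\<in>{..<n}. if walk n w i j then E i j else \<zero>)" for i
  proof -
    have "h (\<Oplus>\<^bsub>free_ring2\<^esub>j\<in>{..<n}. ?F i j) = (\<Oplus>j\<in>{..<n}. h (?F i j))"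
      by (rule h.hom_finsum[unfolded comp_def]) (simp add: Pi_def)
    also have "\<dots> = (\<Oplus>j\<in>{..<n}. if walk n w i j then E i j else \<zero>)"
      by (rule finsum_cong') (simp_all add: hom_word_monom[OF assms] word_image_unit_word)
    finally show ?thesis .
  qed
  have "h (free_of_mat n (walk_mat n w)) = (\<Oplus>i\<in>{..<n}. h (\<Oplus>\<^bsub>free_ring2\<^esub>j\<in>{..<n}. ?F i j))"
    unfolding free_of_walk_mat_eq_finsum
    by (rule h.hom_finsum[unfolded comp_def]) (simp add: Pi_def h.R.finsum_closed)
  also have "\<dots> = word_image w"
    unfolding row word_image_eq_sum_E ..
  finally show ?thesis .
qed

end

lemma word_monom_minus_free_of_walk_mat_in_genideal:
  assumes "2 \<le> n"
  shows "word_monom w \<ominus>\<^bsub>free_ring2\<^esub> free_of_mat n (walk_mat n w) \<in> genideal free_ring2 (relators n)"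
    (is "_ \<in> ?I")
proof -
  let ?Q = "free_ring2 Quot ?I" and ?\<pi> = "a_r_coset free_ring2 ?I"
  interpret R: ring free_ring2 by (rule ring_free_ring2)
  interpret I: ideal ?I free_ring2 by (rule R.genideal_ideal[OF relators_closed])
  interpret Q: ring ?Q by (rule I.quotient_is_ring)
  have \<pi>: "ring_hom_ring free_ring2 ?Q ?\<pi>" by (rule I.rcos_ring_hom_ring)
  interpret \<pi>: ring_hom_ring free_ring2 ?Q ?\<pi> by (rule \<pi>)
  interpret M: shift_relations ?Q n "?\<pi> gen_x" "?\<pi> gen_y"
    by (rule shift_relations_quotient[OF assms])
  have "?\<pi> (word_monom w \<ominus>\<^bsub>free_ring2\<^esub> free_of_mat n (walk_mat n w))
      = M.word_image w \<ominus>\<^bsub>?Q\<^esub> M.word_image w"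
    by (simp add: R.minus_eq Q.minus_eq free_of_mat_closed
        M.hom_word_monom[OF \<pi> refl refl] M.hom_free_of_walk_mat[OF \<pi> refl refl])
  also have "\<dots> = \<zero>\<^bsub>?Q\<^esub>"
    by (simp add: Q.minus_eq Q.r_neg)
  also have "\<dots> = ?I"
    unfolding FactRing_def by (simp only: ring.select_convs)
  finally show ?thesis
    by (rule I.rcos_const_imp_mem[rotated]) (simp add: free_of_mat_closed)
qed

lemma kernel_mat_of_free_subset_genideal:
  assumes "2 \<le> n"
  shows "a_kernel free_ring2 (ring_mat TYPE(int) n ()) (mat_of_free n) \<subseteq> genideal free_ring2 (relators n)"
proof
  interpret R: ring free_ring2 by (rule ring_free_ring2)
  have ideal: "ideal (genideal free_ring2 (relators n)) free_ring2"
    by (rule R.genideal_ideal[OF relators_closed])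
  fix f assume "f \<in> a_kernel free_ring2 (ring_mat TYPE(int) n ()) (mat_of_free n)"
  then have f: "f \<in> carrier free_ring2" and "mat_of_free n f = 0\<^sub>m n n"
    unfolding a_kernel_def' by (simp_all add: ring_mat_simps)
  then have "free_of_mat n (mat_of_free n f) w = 0" for w
    unfolding free_of_mat_eq_double_sum by (intro sum.neutral ballI) simp
  then have "f = (\<lambda>w. \<Sum>u\<in>supp f. f u * (word_monom u \<ominus>\<^bsub>free_ring2\<^esub> free_of_mat n (walk_mat n u)) w)"
    by (subst free_ring2_decomposition[OF f, of n]) (simp add: free_ring2_minus free_of_mat_closed)
  also have "\<dots> \<in> genideal free_ring2 (relators n)"
    using assms
    by (intro free_ring2_ideal_sum[OF ideal] free_ring2_ideal_smult[OF ideal]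
        word_monom_minus_free_of_walk_mat_in_genideal)
       (simp_all add: f[unfolded free_ring2_simps mem_Collect_eq])
  finally show "f \<in> genideal free_ring2 (relators n)" .
qed

theorem theorem1:
  fixes n :: nat
  assumes "n \<ge> 2"
  shows "free_ring2 Quot (genideal free_ring2 (relators n)) \<simeq> ring_mat TYPE(int) n ()"
proof -
  interpret R: ring free_ring2 by (rule ring_free_ring2)
  interpret h: ring_hom_ring free_ring2 "ring_mat TYPE(int) n ()" "mat_of_free n"
    by (rule ring_hom_mat_of_free)
  have "a_kernel free_ring2 (ring_mat TYPE(int) n ()) (mat_of_free n) = genideal free_ring2 (relators n)"
    using kernel_mat_of_free_subset_genideal[OF assms]
      R.genideal_minimal[OF h.kernel_is_ideal relators_in_kernel[OF assms]]
    by (rule equalityI)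
  then show ?thesis
    using h.FactRing_iso[OF mat_of_free_surj] by simp
qed

end
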